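(* Let $0\le\mu<L<+\infty$, $N\ge1$, $R\ge0$, let $H=\{h_{i,k}\}$ define a fixed-step method with $N$ steps, and let $b\in\mathbb{R}^{N+1}$, $C\in\mathbb{S}^{N+2}$. Then the supremum defining $w^{sdp}_{\mu,L}(R,H,N,b,C)$ is finite and attained by some feasible $(G,f)$.
   Context: Fixed-step method with $N$ steps: scalars $h_{i,k}$ for $1\le i\le N$, $0\le k\le N-1$, with $h_{i,k}=0$ for $k\ge i$ (a lower-triangular $H\in\mathbb{R}^{N\times N}$). Let $I=\{0,1,\dots,N,*\}$ and $e_1,\dots,e_{N+2}$ the standard basis of $\mathbb{R}^{N+2}$. For $i=0,\dots,N$ let $h_i=(-h_{i,0},\dots,-h_{i,i-1},0,\dots,0,1)^{\top}\in\mathbb{R}^{N+2}$ (last entry $1$) and $u_i=e_{i+1}$; let $h_*=u_*=0$. For $i,j\in I$ define the symmetric matrix $A_{ij}$ by $2A_{ij}=\frac{L}{L-\mu}\big(u_j(h_i-h_j)^{\top}+(h_i-h_j)u_j^{\top}\big)+\frac{1}{L-\mu}(u_i-u_j)(u_i-u_j)^{\top}+\frac{\mu}{L-\mu}\big(u_i(h_j-h_i)^{\top}+(h_j-h_i)u_i^{\top}\big)+\frac{L\mu}{L-\mu}(h_i-h_j)(h_i-h_j)^{\top}$, and $A_R=e_{N+2}e_{N+2}^{\top}$. Then $w^{sdp}_{\mu,L}(R,H,N,b,C)$ is the supremum of $b^{\top}f+\mathrm{Tr}(CG)$ over $G\in\mathbb{S}^{N+2}$ (symmetric matrices), $f=(f_0,\dots,f_N)\in\mathbb{R}^{N+1}$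 subject to $f_j-f_i+\mathrm{Tr}(GA_{ij})\le0$ for all $i,j\in I$ (with $f_*:=0$), $\mathrm{Tr}(GA_R)\le R^2$, and $G\succeq0$. *)

theory Defs
  imports Complex_Main
begin

text \<open>Matrices in S^(N+2) and vectors in R^(N+2) are represented by
functions on nat, with 0-based indices 0..N+1 (index p here corresponds to e_(p+1)).
The index set I = {0,...,N,*} is rendered as nat option: Some i for i, None for *.\<close>

definition idx :: "nat \<Rightarrow> nat option set" where
  "idx N = insert None (Some ` {..N})"

definition hvec :: "nat \<Rightarrow> (nat \<Rightarrow> nat \<Rightarrow> real) \<Rightarrow> nat option \<Rightarrow> nat \<Rightarrow> real" where
  "hvec N H i p = (case i of None \<Rightarrow> 0
     | Some j \<Rightarrow> if p = N + 1 then 1 else if p < j then - H j p else 0)"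

definition uvec :: "nat option \<Rightarrow> nat \<Rightarrow> real" where
  "uvec i p = (case i of None \<Rightarrow> 0 | Some j \<Rightarrow> if p = j then 1 else 0)"

definition Amat :: "real \<Rightarrow> real \<Rightarrow> nat \<Rightarrow> (nat \<Rightarrow> nat \<Rightarrow> real) \<Rightarrow> nat option \<Rightarrow> nat option
    \<Rightarrow> nat \<Rightarrow> nat \<Rightarrow> real" where
  "Amat \<mu> L N H i j p q = (1/2) *
     ( L / (L - \<mu>) * (uvec j p * (hvec N H i q - hvec N H j q) + (hvec N H i p - hvec N H j p) * uvec j q)
     + 1 / (L - \<mu>) * ((uvec i p - uvec j p) * (uvec i q - uvec j q))
     + \<mu> / (L - \<mu>) * (uvec i p * (hvec N H j q - hvec N H i q) + (hvec N H j p - hvec N H i p) * uvec i q)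
     + L * \<mu> / (L - \<mu>) * ((hvec N H i p - hvec N H j p) * (hvec N H i q - hvec N H j q)))"

definition AR :: "nat \<Rightarrow> nat \<Rightarrow> nat \<Rightarrow> real" where
  "AR N p q = (if p = N + 1 \<and> q = N + 1 then 1 else 0)"

definition trprod :: "nat \<Rightarrow> (nat \<Rightarrow> nat \<Rightarrow> real) \<Rightarrow> (nat \<Rightarrow> nat \<Rightarrow> real) \<Rightarrow> real" where
  "trprod N X Y = (\<Sum>p<N+2. \<Sum>q<N+2. X p q * Y q p)"

definition symm :: "nat \<Rightarrow> (nat \<Rightarrow> nat \<Rightarrow> real) \<Rightarrow> bool" where
  "symm n X = (\<forall>p<n. \<forall>q<n. X p q = X q p)"

definition psd :: "nat \<Rightarrow> (nat \<Rightarrow> nat \<Rightarrow> real) \<Rightarrow> bool" where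
  "psd n X = (symm n X \<and> (\<forall>x :: nat \<Rightarrow> real. 0 \<le> (\<Sum>p<n. \<Sum>q<n. x p * X p q * x q)))"

definition fval :: "(nat \<Rightarrow> real) \<Rightarrow> nat option \<Rightarrow> real" where
  "fval f i = (case i of None \<Rightarrow> 0 | Some j \<Rightarrow> f j)"

definition sdp_feasible :: "real \<Rightarrow> real \<Rightarrow> real \<Rightarrow> (nat \<Rightarrow> nat \<Rightarrow> real) \<Rightarrow> nat
    \<Rightarrow> (nat \<Rightarrow> nat \<Rightarrow> real) \<Rightarrow> (nat \<Rightarrow> real) \<Rightarrow> bool" where
  "sdp_feasible \<mu> L R H N G f =
     (psd (N + 2) G
      \<and> (\<forall>i\<in>idx N. \<forall>j\<in>idx N. fval f j - fval f i + trprod N G (Amat \<mu> L N H i j) \<le> 0)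
      \<and> trprod N G (AR N) \<le> R\<^sup>2)"

definition sdp_obj :: "nat \<Rightarrow> (nat \<Rightarrow> real) \<Rightarrow> (nat \<Rightarrow> nat \<Rightarrow> real)
    \<Rightarrow> (nat \<Rightarrow> nat \<Rightarrow> real) \<Rightarrow> (nat \<Rightarrow> real) \<Rightarrow> real" where
  "sdp_obj N b C G f = (\<Sum>i\<le>N. b i * f i) + trprod N C G"

end

(*
  A feasible (G, f) is the Gram matrix and function values of N + 1 iterates x_i (relative to
  the minimiser x_* ) and their gradients g_i: G(N+1, N+1) = |x_0 - x_*|^2, G(i, i) = |g_i|^2,
  and x_i - x_* is the vector h_i in these coordinates. The interpolation constraints between
  x_i and x_* give 0 <= f_i <= L/2 |x_i - x_*|^2 and |g_i| <= (L + mu) |x_i - x_*|. Since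
  x_i - x_* = (x_0 - x_* ) - sum_{k<i} h_{i,k} g_k, induction on i bounds all these quantities in
  terms of R, so the feasible set is bounded. It is also closed, and the objective is linear,
  hence the supremum is attained by compactness.
*)
theory Submission
  imports Defs "HOL-Analysis.Function_Topology"
begin

definition gram :: "nat \<Rightarrow> (nat \<Rightarrow> nat \<Rightarrow> real) \<Rightarrow> (nat \<Rightarrow> real) \<Rightarrow> (nat \<Rightarrow> real) \<Rightarrow> real" where
  "gram n G v w = (\<Sum>p<n. \<Sum>q<n. v p * G p q * w q)"

abbreviation gram_sq :: "nat \<Rightarrow> (nat \<Rightarrow> nat \<Rightarrow> real) \<Rightarrow> (nat \<Rightarrow> real) \<Rightarrow> real" where
  "gram_sq n G v \<equiv> gram n G v v"

lemma gram_sym: "symm n G \<Longrightarrow> gram n G v w = gram n G w v"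
  unfolding gram_def symm_def
  by (subst sum.swap) (auto intro!: sum.cong simp: mult.commute mult.left_commute)

lemma gram_lincomb:
  "gram n G (\<lambda>p. a * v p + b * w p) (\<lambda>p. a * v p + b * w p) =
     a\<^sup>2 * gram n G v v + a * b * gram n G v w + a * b * gram n G w v + b\<^sup>2 * gram n G w w"
proof -
  have "(a * v p + b * w p) * G p q * (a * v q + b * w q) =
      a\<^sup>2 * (v p * G p q * v q) + a * b * (v p * G p q * w q)
      + a * b * (w p * G p q * v q) + b\<^sup>2 * (w p * G p q * w q)" for p q
    by (simp add: algebra_simps power2_eq_square)
  then show ?thesis by (simp add: gram_def sum.distrib sum_distrib_left)
qed

lemma gram_sq_scale: "gram_sq n G (\<lambda>p. c * v p) = c\<^sup>2 * gram_sq n G v"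
  using gram_lincomb[of n G c v 0 v] by simp

lemma gram_indicator:
  assumes "a < n" "b < n"
  shows "gram n G (\<lambda>p. if p = a then 1 else 0) (\<lambda>q. if q = b then 1 else 0) = G a b"
proof -
  have "(if p = a then 1 else 0) * G p q * (if q = b then 1 else 0)
      = (if q = b then if p = a then G a b else 0 else 0)" for p q
    by simp
  then show ?thesis using assms by (simp add: gram_def sum.delta)
qed

lemma psd_gram_nonneg: "psd n G \<Longrightarrow> 0 \<le> gram_sq n G v"
  by (simp add: psd_def gram_def)

lemma psd_gram_add_le:
  assumes "psd n G"
  shows "gram_sq n G (\<lambda>p. v p + w p) \<le> 2 * gram_sq n G v + 2 * gram_sq n G w"
proof -
  have "0 \<le> gram n G (\<lambda>p. 1 * v p + (-1) * w p) (\<lambda>p. 1 * v p + (-1) * w p)"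
    using assms by (rule psd_gram_nonneg)
  then show ?thesis using gram_lincomb[of n G 1 v 1 w] gram_lincomb[of n G 1 v "-1" w] by simp
qed

lemma psd_gram_sum_le:
  assumes "psd n G"
  shows "gram_sq n G (\<lambda>p. \<Sum>k<m. v k p) \<le> 2 ^ m * (\<Sum>k<m. gram_sq n G (v k))"
proof (induction m)
  case 0
  then show ?case by (simp add: gram_def)
next
  case (Suc m)
  have "1 * gram n G (v m) (v m) \<le> 2 ^ m * gram n G (v m) (v m)"
    using psd_gram_nonneg[OF assms] by (intro mult_right_mono) auto
  moreover have "gram n G (\<lambda>p. \<Sum>k<Suc m. v k p) (\<lambda>p. \<Sum>k<Suc m. v k p)
      \<le> 2 * gram n G (\<lambda>p. \<Sum>k<m. v k p) (\<lambda>p. \<Sum>k<m. v k p) + 2 * gram n G (v m) (v m)"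
    using psd_gram_add_le[OF assms] by simp
  ultimately show ?case using Suc by (simp add: algebra_simps)
qed

lemma psd_entry_bound:
  assumes "psd n G" "p < n" "q < n"
  shows "2 * \<bar>G p q\<bar> \<le> G p p + G q q"
proof -
  let ?e = "\<lambda>a r. if r = a then 1 else (0::real)"
  have "0 \<le> G p p + c * G p q + c * G q p + c\<^sup>2 * G q q" for c
    using psd_gram_nonneg[OF assms(1), of "\<lambda>r. 1 * ?e p r + c * ?e q r"]
      gram_lincomb[of n G 1 "?e p" c "?e q"] assms(2,3)
    by (simp add: gram_indicator)
  from this[of 1] this[of "-1"] show ?thesis
    using assms by (auto simp: psd_def symm_def abs_le_iff)
qed

lemma trprod_outer: "trprod N G (\<lambda>p q. v p * w q) = gram (N + 2) G w v"
  unfolding trprod_def gram_def by (intro sum.cong refl) (simp add: algebra_simps)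

lemma trprod_add: "trprod N G (\<lambda>p q. X p q + Y p q) = trprod N G X + trprod N G Y"
  by (simp add: trprod_def distrib_left sum.distrib)

lemma trprod_diff: "trprod N G (\<lambda>p q. X p q - Y p q) = trprod N G X - trprod N G Y"
  by (simp add: trprod_def right_diff_distrib sum_subtractf)

lemma trprod_scale: "trprod N G (\<lambda>p q. c * X p q) = c * trprod N G X"
  by (simp add: trprod_def sum_distrib_left algebra_simps)

lemma trprod_divide: "trprod N G (\<lambda>p q. X p q / c) = trprod N G X / c"
  unfolding trprod_def by (simp only: times_divide_eq_right sum_divide_distrib)

lemma trprod_AR: "trprod N G (AR N) = G (N + 1) (N + 1)"
proof -
  have "G p q * AR N q p = (if p = N + 1 then if q = N + 1 then G (N + 1) (N + 1) else 0 else 0)" for p q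
    by (simp add: AR_def)
  then show ?thesis by (simp add: trprod_def sum.delta)
qed

lemma uvec_Some: "uvec (Some k) = (\<lambda>p. if p = k then 1 else 0)"
  by (simp add: uvec_def fun_eq_iff)

lemma hvec_Some_0: "hvec N H (Some 0) = (\<lambda>p. if p = N + 1 then 1 else 0)"
  by (simp add: hvec_def fun_eq_iff)

lemma hvec_Some_decomp:
  assumes "i \<le> N"
  shows "hvec N H (Some i) = (\<lambda>p. hvec N H (Some 0) p + (\<Sum>k<i. - H i k * uvec (Some k) p))"
proof -
  have "(\<Sum>k<i. - H i k * uvec (Some k) p) = (\<Sum>k<i. if k = p then - H i p else 0)" for p
    by (intro sum.cong) (auto simp: uvec_def)
  then show ?thesis using assms by (auto simp: fun_eq_iff hvec_def)
qed

lemma hvec_None [simp]: "hvec N H None = (\<lambda>p. 0)"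
  by (simp add: hvec_def fun_eq_iff)

lemma uvec_None [simp]: "uvec None = (\<lambda>p. 0)"
  by (simp add: uvec_def fun_eq_iff)

lemma Amat_Some_None:
  "Amat \<mu> L N H (Some i) None = (\<lambda>p q. (uvec (Some i) p * uvec (Some i) q
     - \<mu> * (uvec (Some i) p * hvec N H (Some i) q) - \<mu> * (hvec N H (Some i) p * uvec (Some i) q)
     + L * \<mu> * (hvec N H (Some i) p * hvec N H (Some i) q)) / (2 * (L - \<mu>)))"
  by (intro ext) (simp add: Amat_def divide_simps; simp add: algebra_simps)

lemma Amat_None_Some:
  "Amat \<mu> L N H None (Some i) = (\<lambda>p q. (uvec (Some i) p * uvec (Some i) q
     - L * (uvec (Some i) p * hvec N H (Some i) q) - L * (hvec N H (Some i) p * uvec (Some i) q)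
     + L * \<mu> * (hvec N H (Some i) p * hvec N H (Some i) q)) / (2 * (L - \<mu>)))"
  by (intro ext) (simp add: Amat_def divide_simps; simp add: algebra_simps)

lemma trprod_Amat_Some_None:
  assumes "symm (N + 2) G"
  shows "trprod N G (Amat \<mu> L N H (Some i) None) =
    (gram_sq (N + 2) G (uvec (Some i)) - 2 * \<mu> * gram (N + 2) G (uvec (Some i)) (hvec N H (Some i))
     + L * \<mu> * gram_sq (N + 2) G (hvec N H (Some i))) / (2 * (L - \<mu>))"
  using gram_sym[OF assms, of "uvec (Some i)" "hvec N H (Some i)"]
  by (simp add: Amat_Some_None trprod_add trprod_diff trprod_scale trprod_divide trprod_outer)

lemma trprod_Amat_None_Some:
  assumes "symm (N + 2) G"
  shows "trprod N G (Amat \<mu> L N H None (Some i)) =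
    (gram_sq (N + 2) G (uvec (Some i)) - 2 * L * gram (N + 2) G (uvec (Some i)) (hvec N H (Some i))
     + L * \<mu> * gram_sq (N + 2) G (hvec N H (Some i))) / (2 * (L - \<mu>))"
  using gram_sym[OF assms, of "uvec (Some i)" "hvec N H (Some i)"]
  by (simp add: Amat_None_Some trprod_add trprod_diff trprod_scale trprod_divide trprod_outer)

text \<open>Here \<open>a = |g|\<^sup>2\<close>, \<open>b = \<langle>g, x - x\<^sub>*\<rangle>\<close>, \<open>x = |x - x\<^sub>*|\<^sup>2\<close>, and \<open>lower\<close>, \<open>upper\<close>
  are the interpolation constraints between the pairs \<open>(i, *)\<close> and \<open>(*, i)\<close>.\<close>

lemma interpolation_inequalities:
  fixes \<mu> L a b x f :: real
  assumes "0 \<le> \<mu>" "\<mu> < L" "0 \<le> x"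
    and cauchy_schwarz: "\<And>c. 0 \<le> a - 2 * c * b + c\<^sup>2 * x"
    and lower: "(a - 2 * \<mu> * b + L * \<mu> * x) / (2 * (L - \<mu>)) \<le> f"
    and upper: "f \<le> - ((a - 2 * L * b + L * \<mu> * x) / (2 * (L - \<mu>)))"
  shows "0 \<le> f" and "f \<le> L / 2 * x" and "a \<le> (L + \<mu>)\<^sup>2 * x"
proof -
  have d: "0 < L - \<mu>" using assms by simp
  have lo: "a - 2 * \<mu> * b + L * \<mu> * x \<le> 2 * (L - \<mu>) * f"
    using lower d by (simp add: divide_simps mult.commute)
  have hi: "2 * (L - \<mu>) * f \<le> 2 * L * b - a - L * \<mu> * x"
    using upper d by (simp add: divide_simps algebra_simps)
  have "\<mu> * (L - \<mu>) * x \<le> 2 * (L - \<mu>) * f"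
    using lo cauchy_schwarz[of \<mu>] by (simp add: algebra_simps power2_eq_square)
  moreover have "0 \<le> \<mu> * (L - \<mu>) * x" using assms d by simp
  ultimately have "0 \<le> 2 * (L - \<mu>) * f" by linarith
  then show "0 \<le> f" using d by (simp add: zero_le_mult_iff)
  have "(L - \<mu>) * (2 * f) \<le> (L - \<mu>) * (L * x)"
    using hi cauchy_schwarz[of L] by (simp add: algebra_simps power2_eq_square)
  then show "f \<le> L / 2 * x" using d by simp
  have "0 \<le> L * \<mu> * x" using assms by simp
  then show "a \<le> (L + \<mu>)\<^sup>2 * x"
    using lo hi cauchy_schwarz[of "L + \<mu>"] by (simp add: algebra_simps power2_eq_square)
qed

lemma sdp_feasible_psd: "sdp_feasible \<mu> L R H N G f \<Longrightarrow> psd (N + 2) G"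
  by (simp add: sdp_feasible_def)

lemma sdp_feasible_corner: "sdp_feasible \<mu> L R H N G f \<Longrightarrow> G (N + 1) (N + 1) \<le> R\<^sup>2"
  by (simp add: sdp_feasible_def trprod_AR)

lemma sdp_feasible_zero: "sdp_feasible \<mu> L R H N (\<lambda>p q. 0) (\<lambda>i. 0)"
  by (simp add: sdp_feasible_def psd_def symm_def trprod_def fval_def split: option.split)

lemma sdp_feasible_interpolation:
  assumes feas: "sdp_feasible \<mu> L R H N G f" and "0 \<le> \<mu>" "\<mu> < L" and "i \<le> N"
  shows "0 \<le> f i" and "f i \<le> L / 2 * gram_sq (N + 2) G (hvec N H (Some i))"
    and "G i i \<le> (L + \<mu>)\<^sup>2 * gram_sq (N + 2) G (hvec N H (Some i))"
proof -
  let ?u = "uvec (Some i)" and ?h = "hvec N H (Some i)"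
  have psd: "psd (N + 2) G" using feas by (rule sdp_feasible_psd)
  then have sym: "symm (N + 2) G" by (simp add: psd_def)
  have idx: "Some i \<in> idx N" "None \<in> idx N" using \<open>i \<le> N\<close> by (auto simp: idx_def)
  have lower: "trprod N G (Amat \<mu> L N H (Some i) None) \<le> f i"
    using feas idx by (force simp: sdp_feasible_def fval_def)
  have upper: "f i \<le> - trprod N G (Amat \<mu> L N H None (Some i))"
    using feas idx by (force simp: sdp_feasible_def fval_def)
  have cauchy_schwarz: "0 \<le> gram_sq (N + 2) G ?u - 2 * c * gram (N + 2) G ?u ?h + c\<^sup>2 * gram_sq (N + 2) G ?h" for c
    using psd_gram_nonneg[OF psd, of "\<lambda>p. 1 * ?u p + (- c) * ?h p"]
    by (simp only: gram_lincomb gram_sym[OF sym, of ?h ?u]) simp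
  have "G i i = gram_sq (N + 2) G ?u" using \<open>i \<le> N\<close> by (simp add: uvec_Some gram_indicator)
  then show "0 \<le> f i" "f i \<le> L / 2 * gram_sq (N + 2) G ?h" "G i i \<le> (L + \<mu>)\<^sup>2 * gram_sq (N + 2) G ?h"
    using interpolation_inequalities[OF assms(2,3) psd_gram_nonneg[OF psd] cauchy_schwarz]
      lower upper
    by (simp_all add: trprod_Amat_Some_None[OF sym] trprod_Amat_None_Some[OF sym])
qed

lemma sdp_feasible_gram_hvec_le:
  assumes feas: "sdp_feasible \<mu> L R H N G f" and mu: "0 \<le> \<mu>" "\<mu> < L" and "i \<le> N"
    and prev: "\<And>k. k < i \<Longrightarrow> gram_sq (N + 2) G (hvec N H (Some k)) \<le> M"
  shows "gram_sq (N + 2) G (hvec N H (Some i)) \<le> 2 * R\<^sup>2 + 2 * 2 ^ i * (\<Sum>k<i. (H i k)\<^sup>2 * ((L + \<mu>)\<^sup>2 * M))"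
proof -
  have psd: "psd (N + 2) G" using feas by (rule sdp_feasible_psd)
  let ?s = "\<lambda>k p. - H i k * uvec (Some k) p"
  have "gram_sq (N + 2) G (hvec N H (Some i))
      \<le> 2 * gram_sq (N + 2) G (hvec N H (Some 0)) + 2 * gram_sq (N + 2) G (\<lambda>p. \<Sum>k<i. ?s k p)"
    using psd_gram_add_le[OF psd] by (simp add: hvec_Some_decomp[OF \<open>i \<le> N\<close>])
  also have "gram_sq (N + 2) G (hvec N H (Some 0)) \<le> R\<^sup>2"
    using sdp_feasible_corner[OF feas] by (simp add: hvec_Some_0 gram_indicator)
  also have "gram_sq (N + 2) G (\<lambda>p. \<Sum>k<i. ?s k p) \<le> 2 ^ i * (\<Sum>k<i. gram_sq (N + 2) G (?s k))"
    by (rule psd_gram_sum_le[OF psd])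
  also have "(\<Sum>k<i. gram_sq (N + 2) G (?s k)) \<le> (\<Sum>k<i. (H i k)\<^sup>2 * ((L + \<mu>)\<^sup>2 * M))"
  proof (rule sum_mono)
    fix k assume "k \<in> {..<i}"
    then have k: "k < i" "k \<le> N" using \<open>i \<le> N\<close> by auto
    have "gram_sq (N + 2) G (uvec (Some k)) = G k k" using k by (simp add: uvec_Some gram_indicator)
    also have "\<dots> \<le> (L + \<mu>)\<^sup>2 * gram_sq (N + 2) G (hvec N H (Some k))"
      by (rule sdp_feasible_interpolation(3)[OF feas mu k(2)])
    also have "\<dots> \<le> (L + \<mu>)\<^sup>2 * M" using prev[OF k(1)] by (simp add: mult_left_mono)
    finally show "gram_sq (N + 2) G (?s k) \<le> (H i k)\<^sup>2 * ((L + \<mu>)\<^sup>2 * M)"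
      using gram_sq_scale[of "N + 2" G "- H i k" "uvec (Some k)"] by (simp add: mult_left_mono)
  qed
  finally show ?thesis by (simp add: mult_left_mono)
qed

lemma sdp_feasible_gram_hvec_bounded:
  assumes "0 \<le> \<mu>" "\<mu> < L" "i \<le> N"
  shows "\<exists>M. \<forall>k\<le>i. \<forall>G f. sdp_feasible \<mu> L R H N G f \<longrightarrow> gram_sq (N + 2) G (hvec N H (Some k)) \<le> M"
  using \<open>i \<le> N\<close>
proof (induction i)
  case 0
  have "gram_sq (N + 2) G (hvec N H (Some 0)) \<le> R\<^sup>2" if "sdp_feasible \<mu> L R H N G f" for G f
    using sdp_feasible_corner[OF that] by (simp add: hvec_Some_0 gram_indicator)
  then show ?case by auto
next
  case (Suc i)
  then obtain M where M: "\<And>k G f. k \<le> i \<Longrightarrow> sdp_feasible \<mu> L R H N G f \<Longrightarrow>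
      gram_sq (N + 2) G (hvec N H (Some k)) \<le> M"
    by auto
  define M' where "M' = 2 * R\<^sup>2 + 2 * 2 ^ Suc i * (\<Sum>k<Suc i. (H (Suc i) k)\<^sup>2 * ((L + \<mu>)\<^sup>2 * M))"
  have "gram_sq (N + 2) G (hvec N H (Some k)) \<le> max M M'"
    if "k \<le> Suc i" "sdp_feasible \<mu> L R H N G f" for k G f
  proof (cases "k = Suc i")
    case True
    then show ?thesis
      using sdp_feasible_gram_hvec_le[OF that(2) assms(1,2) Suc.prems, of M] M[OF _ that(2)]
      by (simp add: M'_def)
  next
    case False
    then have "k \<le> i" using that(1) by simp
    then show ?thesis using M[OF _ that(2)] by fastforce
  qed
  then show ?case by blast
qed

lemma sdp_feasible_bounded:
  assumes "0 \<le> \<mu>" "\<mu> < L"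
  shows "\<exists>B. \<forall>G f. sdp_feasible \<mu> L R H N G f \<longrightarrow>
     (\<forall>p<N + 2. \<forall>q<N + 2. \<bar>G p q\<bar> \<le> B) \<and> (\<forall>i\<le>N. \<bar>f i\<bar> \<le> B)"
proof -
  from sdp_feasible_gram_hvec_bounded[OF assms order_refl]
  obtain M where M: "\<forall>k\<le>N. \<forall>G f. sdp_feasible \<mu> L R H N G f \<longrightarrow>
      gram_sq (N + 2) G (hvec N H (Some k)) \<le> M" ..
  then have M_abs: "gram_sq (N + 2) G (hvec N H (Some k)) \<le> \<bar>M\<bar>"
    if "sdp_feasible \<mu> L R H N G f" "k \<le> N" for G f k
    using that by fastforce
  define B where "B = R\<^sup>2 + (L + \<mu>)\<^sup>2 * \<bar>M\<bar> + L * \<bar>M\<bar>"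
  have nonneg: "0 \<le> R\<^sup>2" "0 \<le> (L + \<mu>)\<^sup>2 * \<bar>M\<bar>" "0 \<le> L * \<bar>M\<bar>" using assms by auto
  have diag: "G k k \<le> B" if feas: "sdp_feasible \<mu> L R H N G f" and "k < N + 2" for G f k
  proof (cases "k \<le> N")
    case True
    have "(L + \<mu>)\<^sup>2 * gram_sq (N + 2) G (hvec N H (Some k)) \<le> (L + \<mu>)\<^sup>2 * \<bar>M\<bar>"
      by (rule mult_left_mono[OF M_abs[OF feas True]]) simp
    then show ?thesis
      using sdp_feasible_interpolation(3)[OF feas assms True] nonneg unfolding B_def by linarith
  next
    case False
    then have "G k k \<le> R\<^sup>2" using that sdp_feasible_corner[OF feas] by (simp add: not_le less_Suc_eq)
    then show ?thesis using nonneg unfolding B_def by linarith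
  qed
  have entry_bound: "\<bar>G p q\<bar> \<le> B"
    if feas: "sdp_feasible \<mu> L R H N G f" and pq: "p < N + 2" "q < N + 2" for G f p q
    using psd_entry_bound[OF sdp_feasible_psd[OF feas] pq] diag[OF feas pq(1)] diag[OF feas pq(2)]
    by linarith
  have value_bound: "\<bar>f i\<bar> \<le> B" if feas: "sdp_feasible \<mu> L R H N G f" and i: "i \<le> N" for G f i
  proof -
    have "L / 2 * gram_sq (N + 2) G (hvec N H (Some i)) \<le> L / 2 * \<bar>M\<bar>"
      by (rule mult_left_mono[OF M_abs[OF feas i]]) (use assms in simp)
    then show ?thesis
      using sdp_feasible_interpolation(1,2)[OF feas assms i] nonneg unfolding B_def by linarith
  qed
  show ?thesis using entry_bound value_bound by blast
qed

lemma continuous_on_matrix_entry [continuous_intros]: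
  "continuous_on S (\<lambda>z :: ('a \<Rightarrow> 'b \<Rightarrow> 'c :: topological_space) \<times> 'd :: topological_space. fst z p q)"
  by (rule continuous_on_product_then_coordinatewise[OF
        continuous_on_product_then_coordinatewise[OF continuous_on_fst[OF continuous_on_id]]])

lemma continuous_on_vector_entry [continuous_intros]:
  "continuous_on S (\<lambda>z :: 'a :: topological_space \<times> ('b \<Rightarrow> 'c :: topological_space). snd z i)"
  by (rule continuous_on_product_then_coordinatewise[OF continuous_on_snd[OF continuous_on_id]])

lemma compact_PiE_UNIV:
  "(\<And>i. compact (S i)) \<Longrightarrow> compact (PiE UNIV S :: ('a \<Rightarrow> 'b :: topological_space) set)"
proof -
  assume "\<And>i. compact (S i)"
  then have "compactin (product_topology (\<lambda>i. euclidean) UNIV) (PiE UNIV S)"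
    by (auto simp: compactin_PiE)
  then show ?thesis by (simp add: euclidean_product_topology)
qed

lemma continuous_on_trprod:
  "continuous_on S (\<lambda>z :: (nat \<Rightarrow> nat \<Rightarrow> real) \<times> (nat \<Rightarrow> real). trprod N (fst z) X)"
  unfolding trprod_def by (intro continuous_intros)

lemma closed_sdp_feasible: "closed {z. sdp_feasible \<mu> L R H N (fst z) (snd z)}"
proof -
  have fval: "continuous_on UNIV (\<lambda>z :: (nat \<Rightarrow> nat \<Rightarrow> real) \<times> (nat \<Rightarrow> real). fval (snd z) j)" for j
    by (cases j) (simp_all add: fval_def continuous_intros)
  have "{z. sdp_feasible \<mu> L R H N (fst z) (snd z)} =
      {z. symm (N + 2) (fst z)} \<inter> (\<Inter>x. {z. 0 \<le> (\<Sum>p<N + 2. \<Sum>q<N + 2. x p * fst z p q * x q)})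
      \<inter> (\<Inter>i\<in>idx N. \<Inter>j\<in>idx N.
          {z. fval (snd z) j - fval (snd z) i + trprod N (fst z) (Amat \<mu> L N H i j) \<le> 0})
      \<inter> {z. trprod N (fst z) (AR N) \<le> R\<^sup>2}"
    by (auto simp: sdp_feasible_def psd_def)
  moreover have "closed {z :: (nat \<Rightarrow> nat \<Rightarrow> real) \<times> (nat \<Rightarrow> real). symm (N + 2) (fst z)}"
    unfolding symm_def
    by (intro closed_Collect_all closed_Collect_imp closed_Collect_eq) (auto intro!: continuous_intros)
  moreover have "closed {z :: (nat \<Rightarrow> nat \<Rightarrow> real) \<times> (nat \<Rightarrow> real).
      0 \<le> (\<Sum>p<N + 2. \<Sum>q<N + 2. x p * fst z p q * x q)}" for x
    by (intro closed_Collect_le) (auto intro!: continuous_intros)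
  moreover have "closed {z :: (nat \<Rightarrow> nat \<Rightarrow> real) \<times> (nat \<Rightarrow> real).
      fval (snd z) j - fval (snd z) i + trprod N (fst z) (Amat \<mu> L N H i j) \<le> 0}" for i j
    by (intro closed_Collect_le continuous_on_add continuous_on_diff fval continuous_on_trprod
        continuous_on_const)
  moreover have "closed {z :: (nat \<Rightarrow> nat \<Rightarrow> real) \<times> (nat \<Rightarrow> real). trprod N (fst z) (AR N) \<le> R\<^sup>2}"
    by (intro closed_Collect_le continuous_on_trprod continuous_on_const)
  ultimately show ?thesis by (auto intro!: closed_Int closed_INT)
qed

lemma sdp_feasible_cong:
  assumes G: "\<forall>p<N + 2. \<forall>q<N + 2. G p q = G' p q" and f: "\<forall>i\<le>N. f i = f' i"
  shows "sdp_feasible \<mu> L R H N G f = sdp_feasible \<mu> L R H N G' f'"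
proof -
  have trprod: "trprod N G X = trprod N G' X" for X
    unfolding trprod_def using G by (intro sum.cong refl) auto
  have "symm (N + 2) G = symm (N + 2) G'" unfolding symm_def using G by auto
  moreover have "(\<Sum>p<N + 2. \<Sum>q<N + 2. x p * G p q * x q) = (\<Sum>p<N + 2. \<Sum>q<N + 2. x p * G' p q * x q)" for x
    using G by (intro sum.cong refl) auto
  ultimately have psd: "psd (N + 2) G = psd (N + 2) G'" unfolding psd_def by simp
  have "fval f j = fval f' j" if "j \<in> idx N" for j
    using f that by (auto simp: idx_def fval_def)
  then show ?thesis unfolding sdp_feasible_def psd trprod by auto
qed

lemma sdp_obj_cong:
  assumes G: "\<forall>p<N + 2. \<forall>q<N + 2. G p q = G' p q" and f: "\<forall>i\<le>N. f i = f' i"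
  shows "sdp_obj N b C G f = sdp_obj N b C G' f'"
proof -
  have "trprod N C G = trprod N C G'" unfolding trprod_def using G by (intro sum.cong refl) auto
  moreover have "(\<Sum>i\<le>N. b i * f i) = (\<Sum>i\<le>N. b i * f' i)" using f by (intro sum.cong) auto
  ultimately show ?thesis unfolding sdp_obj_def by simp
qed

text \<open>Feasibility and the objective only see the leading \<open>(N+2) \<times> (N+2)\<close> block of \<open>G\<close> and
  \<open>f 0, \<dots>, f N\<close>; all other entries are unconstrained, so the feasible set itself is unbounded
  and compactness is only available after truncation to this box.\<close>

definition sdp_box :: "nat \<Rightarrow> real \<Rightarrow> ((nat \<Rightarrow> nat \<Rightarrow> real) \<times> (nat \<Rightarrow> real)) set" where
  "sdp_box N B = PiE UNIV (\<lambda>p. PiE UNIV (\<lambda>q. if p < N + 2 \<and> q < N + 2 then {-B..B} else {0}))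
      \<times> PiE UNIV (\<lambda>i. if i \<le> N then {-B..B} else {0})"

lemma compact_sdp_box: "compact (sdp_box N B)"
  unfolding sdp_box_def by (intro compact_Times compact_PiE_UNIV) auto

lemma sdp_feasible_truncation:
  assumes "sdp_feasible \<mu> L R H N G f"
    and "\<forall>p<N + 2. \<forall>q<N + 2. \<bar>G p q\<bar> \<le> B" and "\<forall>i\<le>N. \<bar>f i\<bar> \<le> B"
  shows "\<exists>z \<in> {z. sdp_feasible \<mu> L R H N (fst z) (snd z)} \<inter> sdp_box N B.
    sdp_obj N b C (fst z) (snd z) = sdp_obj N b C G f"
proof
  let ?G = "\<lambda>p q. if p < N + 2 \<and> q < N + 2 then G p q else 0"
    and ?f = "\<lambda>i. if i \<le> N then f i else 0"
  have agree: "\<forall>p<N + 2. \<forall>q<N + 2. ?G p q = G p q" "\<forall>i\<le>N. ?f i = f i" by simp_all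
  have "(?G, ?f) \<in> sdp_box N B"
    using assms(2,3) by (auto simp: sdp_box_def PiE_iff abs_le_iff minus_le_iff)
  then show "(?G, ?f) \<in> {z. sdp_feasible \<mu> L R H N (fst z) (snd z)} \<inter> sdp_box N B"
    using sdp_feasible_cong[OF agree] assms(1) by simp
  show "sdp_obj N b C (fst (?G, ?f)) (snd (?G, ?f)) = sdp_obj N b C G f"
    using sdp_obj_cong[OF agree] by simp
qed

lemma continuous_on_sdp_obj:
  "continuous_on S (\<lambda>z :: (nat \<Rightarrow> nat \<Rightarrow> real) \<times> (nat \<Rightarrow> real). sdp_obj N b C (fst z) (snd z))"
  unfolding sdp_obj_def trprod_def by (intro continuous_intros)

theorem proposition1:
  fixes \<mu> L R :: real and N :: nat and H :: "nat \<Rightarrow> nat \<Rightarrow> real"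
    and b :: "nat \<Rightarrow> real" and C :: "nat \<Rightarrow> nat \<Rightarrow> real"
  assumes "0 \<le> \<mu>" and "\<mu> < L" and "N \<ge> 1" and "R \<ge> 0"
    and "\<forall>i\<in>{1..N}. \<forall>k<N. i \<le> k \<longrightarrow> H i k = 0"
    and "symm (N + 2) C"
  shows "\<exists>G f. sdp_feasible \<mu> L R H N G f \<and>
           (\<forall>G' f'. sdp_feasible \<mu> L R H N G' f' \<longrightarrow>
               sdp_obj N b C G' f' \<le> sdp_obj N b C G f)"
proof -
  from sdp_feasible_bounded[OF assms(1,2)] obtain B where bounded:
    "\<forall>G f. sdp_feasible \<mu> L R H N G f \<longrightarrow>
       (\<forall>p<N + 2. \<forall>q<N + 2. \<bar>G p q\<bar> \<le> B) \<and> (\<forall>i\<le>N. \<bar>f i\<bar> \<le> B)" ..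
  let ?F = "{z. sdp_feasible \<mu> L R H N (fst z) (snd z)} \<inter> sdp_box N B"
  have truncation: "\<exists>z\<in>?F. sdp_obj N b C (fst z) (snd z) = sdp_obj N b C G f"
    if "sdp_feasible \<mu> L R H N G f" for G f
    using sdp_feasible_truncation[OF that] bounded that by blast
  then have "?F \<noteq> {}" using sdp_feasible_zero by blast
  then obtain z where "z \<in> ?F"
    and max: "\<And>y. y \<in> ?F \<Longrightarrow> sdp_obj N b C (fst y) (snd y) \<le> sdp_obj N b C (fst z) (snd z)"
    using continuous_attains_sup[OF closed_Int_compact[OF closed_sdp_feasible compact_sdp_box[of N B]]
        _ continuous_on_sdp_obj[of _ N b C]] by blast
  show ?thesis
  proof (intro exI conjI allI impI)
    show "sdp_feasible \<mu> L R H N (fst z) (snd z)" using \<open>z \<in> ?F\<close> by simp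
    fix G f assume "sdp_feasible \<mu> L R H N G f"
    with truncation obtain y where "y \<in> ?F" and "sdp_obj N b C (fst y) (snd y) = sdp_obj N b C G f"
      by blast
    then show "sdp_obj N b C G f \<le> sdp_obj N b C (fst z) (snd z)" using max by fastforce
  qed
qed

end
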